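(* Let $S$ be a finitely generated submonoid of $\mathbb N^d$ that has a Frobenius element $\mathbf f$ and is irreducible. Then either $\mathrm{PF}(S)=\{\mathbf f\}$ or $\mathrm{PF}(S)=\{\mathbf f,\mathbf f/2\}$.
   Context: $\mathrm{pos}(S)$ is the rational cone generated by $S$ (nonnegative rational combinations of its generators), $\mathcal H(S)=(\mathrm{pos}(S)\setminus S)\cap\mathbb N^d$, and $\mathrm{PF}(S)=\{\mathbf a\in\mathcal H(S):\mathbf a+(S\setminus\{0\})\subseteq S\}$. A term order on $\mathbb N^d$ is a total order compatible with addition with $0$ least; $\mathbf f\in\mathcal H(S)$ is a Frobenius element if $\mathbf f=\max_\prec\mathcal H(S)$ for some term order $\prec$. $S$ is irreducible if it cannot be expressed as the intersection of two submonoids of $\mathbb N^d$ each containing it properly. *)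

theory Defs
  imports "HOL-Analysis.Finite_Cartesian_Product"
begin

text \<open>Elements of N^d are modelled as vectors of type nat^'d, with 'd a finite index type
  (d = CARD('d)).\<close>

definition submonoid :: "(nat^'d) set \<Rightarrow> bool" where
  "submonoid S \<longleftrightarrow> 0 \<in> S \<and> (\<forall>a\<in>S. \<forall>b\<in>S. a + b \<in> S)"

definition monoid_gen :: "(nat^'d) set \<Rightarrow> (nat^'d) set" where
  "monoid_gen G = \<Inter>{T. submonoid T \<and> G \<subseteq> T}"

definition finitely_generated :: "(nat^'d) set \<Rightarrow> bool" where
  "finitely_generated S \<longleftrightarrow> (\<exists>G. finite G \<and> S = monoid_gen G)"

text \<open>Integer points of the rational cone pos(S): vectors that are nonnegative rational
  combinations of finitely many elements of S.\<close>
definition pos_nat :: "(nat^'d) set \<Rightarrow> (nat^'d) set" where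
  "pos_nat S = {x. \<exists>F q. finite F \<and> F \<subseteq> S \<and> (\<forall>s\<in>F. (q s::rat) \<ge> 0) \<and>
        (\<forall>i. of_nat (x$i) = (\<Sum>s\<in>F. q s * of_nat (s$i)))}"

definition holes :: "(nat^'d) set \<Rightarrow> (nat^'d) set" where
  "holes S = pos_nat S - S"

definition PF :: "(nat^'d) set \<Rightarrow> (nat^'d) set" where
  "PF S = {a \<in> holes S. \<forall>s \<in> S - {0}. a + s \<in> S}"

definition term_order :: "(nat^'d \<Rightarrow> nat^'d \<Rightarrow> bool) \<Rightarrow> bool" where
  "term_order le \<longleftrightarrow>
     (\<forall>a. le a a) \<and> (\<forall>a b. le a b \<and> le b a \<longrightarrow> a = b) \<and>
     (\<forall>a b c. le a b \<and> le b c \<longrightarrow> le a c) \<and> (\<forall>a b. le a b \<or> le b a) \<and>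
     (\<forall>a b c. le a b \<longrightarrow> le (a + c) (b + c)) \<and> (\<forall>a. le 0 a)"

definition frobenius_element :: "(nat^'d) set \<Rightarrow> nat^'d \<Rightarrow> bool" where
  "frobenius_element S f \<longleftrightarrow> f \<in> holes S \<and>
     (\<exists>le. term_order le \<and> (\<forall>h\<in>holes S. le h f))"

definition irreducible_monoid :: "(nat^'d) set \<Rightarrow> bool" where
  "irreducible_monoid S \<longleftrightarrow>
     \<not> (\<exists>S1 S2. submonoid S1 \<and> submonoid S2 \<and> S \<subset> S1 \<and> S \<subset> S2 \<and> S = S1 \<inter> S2)"

end

theory Submission
  imports Defs
begin

text \<open>The Frobenius element f is pseudo-Frobenius and 2f lies in S, so S \<union> {f} is a
  monoid. For any other pseudo-Frobenius element h, S together with the positive multiples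
  of h is a monoid as well. Both monoids contain S properly, so by irreducibility they meet
  outside S, which forces f = n h with n \<ge> 2. If n \<ge> 3 then (n - 1) h is again
  pseudo-Frobenius, and the same argument gives n = k (n - 1) with k \<ge> 2, which is
  impossible. Hence every pseudo-Frobenius element other than f is f/2.\<close>

lemma vector_smult_Suc [simp]: "Suc n *s x = x + n *s (x::nat^'d)"
  by (simp add: vec_eq_iff)

lemma vec_smult_right_cancel:
  fixes h :: "nat^'d"
  assumes "h \<noteq> 0" "m *s h = n *s h"
  shows "m = n"
proof -
  obtain i where "h$i \<noteq> 0" using assms(1) by (auto simp: vec_eq_iff)
  moreover have "m * h$i = n * h$i" using assms(2) by (metis vector_smult_component)
  ultimately show ?thesis by simp
qed

lemma vec_double_inj:
  fixes a b :: "nat^'d"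
  shows "a + a = b + b \<Longrightarrow> a = b"
  by (simp add: vec_eq_iff) (metis add_self_div_2)

lemma submonoid_smult:
  assumes "submonoid T" "x \<in> T"
  shows "n *s x \<in> T"
proof (induction n)
  case 0
  then show ?case using assms(1) by (simp add: submonoid_def)
next
  case (Suc n)
  then show ?case using assms by (simp add: submonoid_def)
qed

lemma sum_extend_by_zero:
  assumes "finite B" "A \<subseteq> B"
  shows "(\<Sum>s\<in>A. p s * c s) = (\<Sum>s\<in>B. (if s \<in> A then p s else 0) * (c s :: 'a::semiring_0))"
  using assms by (intro sum.mono_neutral_cong_left) auto

lemma pos_nat_add:
  assumes "x \<in> pos_nat S" "y \<in> pos_nat S"
  shows "x + y \<in> pos_nat S"
proof -
  obtain F p where F: "finite F" "F \<subseteq> S" "\<forall>s\<in>F. (p s::rat) \<ge> 0"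
    and x: "\<forall>i. of_nat (x$i) = (\<Sum>s\<in>F. p s * of_nat (s$i))"
    using assms(1) unfolding pos_nat_def by blast
  obtain G q where G: "finite G" "G \<subseteq> S" "\<forall>s\<in>G. (q s::rat) \<ge> 0"
    and y: "\<forall>i. of_nat (y$i) = (\<Sum>s\<in>G. q s * of_nat (s$i))"
    using assms(2) unfolding pos_nat_def by blast
  define r where "r s = (if s \<in> F then p s else 0) + (if s \<in> G then q s else 0)" for s
  have "of_nat ((x + y)$i) = (\<Sum>s\<in>F \<union> G. r s * of_nat (s$i))" for i
    using x y sum_extend_by_zero[of "F \<union> G" F p] sum_extend_by_zero[of "F \<union> G" G q] F(1) G(1)
    by (simp add: r_def distrib_right sum.distrib)
  then show ?thesis
    using F G unfolding pos_nat_def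
    by (intro CollectI exI[of _ "F \<union> G"] exI[of _ r]) (auto simp: r_def)
qed

lemma submonoid_pos_nat: "submonoid (pos_nat S)"
proof -
  have "0 \<in> pos_nat S"
    unfolding pos_nat_def by (intro CollectI exI[of _ "{}"]) auto
  then show ?thesis using pos_nat_add by (auto simp: submonoid_def)
qed

lemma subset_pos_nat: "S \<subseteq> pos_nat S"
  unfolding pos_nat_def by (auto intro!: exI[of _ "{s}" for s] exI[of _ "\<lambda>_. 1"])

lemma term_order_add_le_imp_zero:
  assumes "term_order le" "le (a + s) a"
  shows "s = 0"
proof -
  have "le (0 + a) (s + a)" using assms(1) unfolding term_order_def by blast
  then have "a + s = a" using assms unfolding term_order_def by (metis add.commute add_0)
  then show ?thesis by (metis add.right_neutral add_left_cancel)
qed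

lemma frobenius_add_pos_nat:
  assumes "frobenius_element S f" "x \<in> pos_nat S" "x \<noteq> 0"
  shows "f + x \<in> S"
proof (rule ccontr)
  obtain le where le: "term_order le" "\<forall>h\<in>holes S. le h f" and f: "f \<in> pos_nat S"
    using assms(1) unfolding frobenius_element_def holes_def by blast
  assume "f + x \<notin> S"
  moreover have "f + x \<in> pos_nat S" using pos_nat_add[OF f assms(2)] .
  ultimately have "le (f + x) f" using le(2) by (auto simp: holes_def)
  then show False using term_order_add_le_imp_zero[OF le(1)] assms(3) by blast
qed

lemma frobenius_in_PF:
  assumes "frobenius_element S f"
  shows "f \<in> PF S"
proof -
  have "\<forall>s \<in> S - {0}. f + s \<in> S"
    using frobenius_add_pos_nat[OF assms] subset_pos_nat by blast
  then show ?thesis using assms by (simp add: PF_def frobenius_element_def)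
qed

lemma frobenius_double:
  assumes "submonoid S" "frobenius_element S f"
  shows "f + f \<in> S"
proof -
  have "f \<noteq> 0" "f \<in> pos_nat S"
    using assms by (auto simp: submonoid_def frobenius_element_def holes_def)
  then show ?thesis using frobenius_add_pos_nat[OF assms(2)] by blast
qed

lemma PF_nonzero: "0 \<in> S \<Longrightarrow> h \<in> PF S \<Longrightarrow> h \<noteq> 0"
  by (auto simp: PF_def holes_def)

lemma PF_smult_add:
  assumes "h \<in> PF S" "s \<in> S" "s \<noteq> 0" "0 < k"
  shows "k *s h + s \<in> S"
  using \<open>0 < k\<close>
proof (induction k rule: nat_induct_non_zero)
  case 1
  then show ?case using assms by (simp add: PF_def)
next
  case (Suc k)
  have "k *s h + s \<noteq> 0" using \<open>s \<noteq> 0\<close> by (auto simp: vec_eq_iff)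
  then have "h + (k *s h + s) \<in> S" using Suc.IH assms(1) by (simp add: PF_def)
  then show ?case by (simp add: add.assoc)
qed

lemma PF_smult_in_PF:
  assumes "h \<in> PF S" "0 < k" "k *s h \<notin> S"
  shows "k *s h \<in> PF S"
proof -
  have "h \<in> pos_nat S" using assms(1) by (simp add: PF_def holes_def)
  then have "k *s h \<in> pos_nat S" using submonoid_smult submonoid_pos_nat by blast
  moreover have "\<forall>s \<in> S - {0}. k *s h + s \<in> S" using PF_smult_add assms(1,2) by blast
  ultimately show ?thesis using assms(3) by (simp add: PF_def holes_def)
qed

lemma submonoid_insert_PF:
  assumes "submonoid S" "h \<in> PF S" "h + h \<in> S"
  shows "submonoid (insert h S)"
  using assms by (auto simp: submonoid_def PF_def add.commute)

lemma submonoid_Un_PF_multiples: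
  assumes S: "submonoid S" and h: "h \<in> PF S"
  shows "submonoid (S \<union> {k *s h | k. 0 < k})" (is "submonoid ?T")
  unfolding submonoid_def
proof (intro conjI ballI)
  show "0 \<in> ?T" using S by (simp add: submonoid_def)
  have mixed: "k *s h + s \<in> ?T" if "s \<in> S" "0 < k" for k s
  proof (cases "s = 0")
    case True
    then show ?thesis using \<open>0 < k\<close> by auto
  next
    case False
    then show ?thesis using PF_smult_add[OF h \<open>s \<in> S\<close> _ \<open>0 < k\<close>] by blast
  qed
  fix a b assume a: "a \<in> ?T" and b: "b \<in> ?T"
  show "a + b \<in> ?T"
  proof (cases "a \<in> S")
    case True
    show ?thesis
    proof (cases "b \<in> S")
      case True
      then show ?thesis using \<open>a \<in> S\<close> S by (simp add: submonoid_def)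
    next
      case False
      then obtain k where "b = k *s h" "0 < k" using b by blast
      then show ?thesis using mixed[OF \<open>a \<in> S\<close>] by (simp add: add.commute)
    qed
  next
    case False
    then obtain j where j: "a = j *s h" "0 < j" using a by blast
    show ?thesis
    proof (cases "b \<in> S")
      case True
      then show ?thesis using mixed j by blast
    next
      case False
      then obtain k where "b = k *s h" using b by blast
      then have "a + b = (j + k) *s h" using j by (simp add: vector_sadd_rdistrib)
      then show ?thesis using j(2) by blast
    qed
  qed
qed

lemma irreducible_frobenius_multiple:
  assumes S: "submonoid S" "irreducible_monoid S" and f: "frobenius_element S f"
    and h: "h \<in> PF S" "h \<noteq> f"
  shows "\<exists>n\<ge>2. f = n *s h"
proof -
  define T1 where "T1 = insert f S"
  define T2 where "T2 = S \<union> {k *s h | k. 0 < k}"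
  have T1: "submonoid T1" "S \<subset> T1"
    using submonoid_insert_PF[OF S(1) frobenius_in_PF[OF f] frobenius_double[OF S(1) f]] f
    by (auto simp: T1_def frobenius_element_def holes_def)
  have "h \<notin> S" using h(1) by (simp add: PF_def holes_def)
  moreover have "h \<in> T2"
    unfolding T2_def by (auto intro!: exI[of _ "1::nat"])
  ultimately have T2: "submonoid T2" "S \<subset> T2"
    using submonoid_Un_PF_multiples[OF S(1) h(1)] unfolding T2_def by blast+
  have "T1 \<inter> T2 \<noteq> S"
    using S(2) T1 T2 unfolding irreducible_monoid_def by blast
  then obtain k where "f = k *s h" "0 < k"
    using T1(2) T2(2) by (auto simp: T1_def T2_def)
  moreover have "k \<noteq> 1" using calculation h(2) by auto
  ultimately show ?thesis by (intro exI[of _ k]) auto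
qed

lemma irreducible_PF_half:
  assumes S: "submonoid S" "irreducible_monoid S" and f: "frobenius_element S f"
    and h: "h \<in> PF S" "h \<noteq> f"
  shows "h + h = f"
proof -
  obtain n where n: "n \<ge> 2" "f = n *s h"
    using irreducible_frobenius_multiple[OF assms] by blast
  have h0: "h \<noteq> 0" using PF_nonzero[OF _ h(1)] S(1) by (simp add: submonoid_def)
  have "n = 2"
  proof (rule ccontr)
    assume "n \<noteq> 2"
    define g where "g = (n - 1) *s h"
    have "f = (1 + (n - 1)) *s h" using n by simp
    then have hg: "h + g = f" by (simp add: g_def vector_sadd_rdistrib)
    have "g \<noteq> 0" using h0 n(1) by (simp add: g_def vec_eq_iff)
    then have "g \<notin> S" using hg h(1) f by (auto simp: PF_def frobenius_element_def holes_def)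
    then have gPF: "g \<in> PF S" using PF_smult_in_PF[OF h(1)] n(1) by (simp add: g_def)
    have "g \<noteq> f"
      using vec_smult_right_cancel[OF h0, of "n - 1" n] n by (auto simp: g_def)
    then obtain k where k: "k \<ge> 2" "f = k *s g"
      using irreducible_frobenius_multiple[OF S f gPF] by blast
    then have "n *s h = (k * (n - 1)) *s h" using n by (simp add: g_def vector_smult_assoc)
    then have "n = k * (n - 1)" using vec_smult_right_cancel[OF h0] by blast
    moreover have "2 * (n - 1) \<le> k * (n - 1)" using k(1) by simp
    ultimately show False using n(1) \<open>n \<noteq> 2\<close> by linarith
  qed
  then show ?thesis using n by (simp add: vec_eq_iff)
qed

theorem theorem4p3:
  fixes S :: "(nat^'d) set" and f :: "nat^'d"
  assumes "submonoid S" and "finitely_generated S"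
    and "frobenius_element S f" and "irreducible_monoid S"
  shows "PF S = {f} \<or> (\<exists>h. h + h = f \<and> PF S = {f, h})"
proof (cases "PF S \<subseteq> {f}")
  case True
  then show ?thesis using frobenius_in_PF[OF assms(3)] by blast
next
  case False
  then obtain h where h: "h \<in> PF S" "h \<noteq> f" by blast
  have half: "x + x = f" if "x \<in> PF S" "x \<noteq> f" for x
    using irreducible_PF_half[OF assms(1,4,3) that] .
  have "PF S = {f, h}"
  proof (intro equalityI subsetI)
    fix x assume x: "x \<in> PF S"
    show "x \<in> {f, h}"
    proof (cases "x = f")
      case False
      then have "x + x = h + h" using half x h by simp
      then show ?thesis using vec_double_inj by blast
    qed simp
  qed (use frobenius_in_PF[OF assms(3)] h in blast)
  then show ?thesis using half h by blast
qed

end
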